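(* In the changepoint model of the context, for $0<i\le n$, $$\big(X_i\mid Y_{1:n}=y_{1:n}\big)\sim\sum_{j=0}^i\Big(H_{jn}\,\tilde c_{jn}+\sum_{\ell=i}^{n-1}H_{j\ell}\,\tilde c_{j\ell}\,\tilde q_{\ell+1}\Big).$$
   Context: Model: Let $n\ge 1$ and fix observed data $y_1,\dots,y_n$. Let $(\mathbb X,\mathcal X)$, $(\mathbb Y,\mathcal Y)$ be standard Borel spaces, $\psi$ a $\sigma$-finite measure on $(\mathbb Y,\mathcal Y)$, $\mathcal J$ a probability measure on $(\mathbb X,\mathcal X)$, and $q_{ji}\in[0,1]$ for $0\le j<i\le n$. The model consists of random variables $C_i\in\{0,\dots,i\}$, $X_i\in\mathbb X$, $Y_i\in\mathbb Y$, $i=1,\dots,n$, with joint law factorizing as: $P(C_1=0)=q_{01}$, $P(C_1=1)=1-q_{01}$; for $i\ge2$, $C_i$ depends on the past only through $C_{i-1}$, with $P(C_i=j\mid C_{i-1}=j)=q_{ji}$ and $P(C_i=i\mid C_{i-1}=j)=1-q_{ji}$ ($0\le j\le i-1$); $X_1\sim\mathcal J$ independent of $C_1$; for $i\ge 2$, $X_i$ depends on the past only through $(C_i,X_{i-1})$, with $X_i\sim\mathcal J$ if $C_i=i$ and $X_i=X_{i-1}$ if $C_i<i$; $Y_i$ depends on all other variables only through $X_i$, with density $p(Y_i=y\mid X_i=x)$ w.r.t. $\psi$. Assume $\int\prod_{\ell=j}^i p(Y_\ell=y_\ell\mid X_\ell=x)\,\mathcal J(dx)>0$ for all $0<j\le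 i\le n$. $Y_{a:b}=y_{a:b}$ abbreviates $Y_a=y_a,\dots,Y_b=y_b$. Notation: $H_{ji}=P(X_i\in\cdot\mid C_i=j,Y_{1:i}=y_{1:i})$; $\tilde c_{ji}=P(C_i=j\mid C_{i+1}=i+1,Y_{1:i}=y_{1:i})$ for $0<i<n$, and $\tilde c_{jn}=P(C_n=j\mid Y_{1:n}=y_{1:n})$; $\tilde q_i=P(C_i=i\mid Y_{1:n}=y_{1:n})$. *)

theory Defs
  imports "HOL-Probability.Probability"
begin

text \<open>A realisation is a pair (c, z): c is the changepoint path
  (c i = C_i for 1 \<le> i \<le> n, c 0 = 0 and c k = 0 for k > n), z k (1 \<le> k \<le> n) are i.i.d.
  draws from J, independent of the path; X_i = z (max 1 (C_i)), i.e. the fresh draw made at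
  the last changepoint (or at time 1 if there was none).\<close>

definition cpaths :: "nat \<Rightarrow> (nat \<Rightarrow> nat) set" where
  "cpaths n = {c. \<forall>k. (k \<in> {1..n} \<longrightarrow> c k \<le> k) \<and> (k \<notin> {1..n} \<longrightarrow> c k = 0)}"

text \<open>Probability of a path: P(C_1 = 0) = q 0 1, P(C_1 = 1) = 1 - q 0 1 (using c 0 = 0), and
  P(C_i = j | C_{i-1} = j) = q j i, P(C_i = i | C_{i-1} = j) = 1 - q j i.\<close>
definition path_weight :: "(nat \<Rightarrow> nat \<Rightarrow> real) \<Rightarrow> nat \<Rightarrow> (nat \<Rightarrow> nat) \<Rightarrow> real" where
  "path_weight q n c = (\<Prod>i\<in>{1..n}.
      (if c i = c (i - 1) then q (c (i - 1)) i
       else if c i = i then 1 - q (c (i - 1)) i else 0))"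

definition cp_joint :: "nat \<Rightarrow> (nat \<Rightarrow> nat \<Rightarrow> real) \<Rightarrow> 'x measure
      \<Rightarrow> ((nat \<Rightarrow> nat) \<times> (nat \<Rightarrow> 'x)) measure" where
  "cp_joint n q J = density (count_space (cpaths n)) (\<lambda>c. ennreal (path_weight q n c))
                      \<Otimes>\<^sub>M PiM {1..n} (\<lambda>_. J)"

definition Cv :: "nat \<Rightarrow> (nat \<Rightarrow> nat) \<times> (nat \<Rightarrow> 'x) \<Rightarrow> nat" where
  "Cv i \<omega> = fst \<omega> i"

definition Xv :: "nat \<Rightarrow> (nat \<Rightarrow> nat) \<times> (nat \<Rightarrow> 'x) \<Rightarrow> 'x" where
  "Xv i \<omega> = snd \<omega> (max 1 (fst \<omega> i))"

definition lik :: "('x \<Rightarrow> 'y \<Rightarrow> real) \<Rightarrow> (nat \<Rightarrow> 'y) \<Rightarrow> nat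
      \<Rightarrow> (nat \<Rightarrow> nat) \<times> (nat \<Rightarrow> 'x) \<Rightarrow> real" where
  "lik p y m \<omega> = (\<Prod>l\<in>{1..m}. p (Xv l \<omega>) (y l))"

text \<open>P(E | F, Y_{1:m} = y_{1:m}) by Bayes' formula (x / 0 = 0 convention).\<close>
definition post :: "nat \<Rightarrow> (nat \<Rightarrow> nat \<Rightarrow> real) \<Rightarrow> 'x measure \<Rightarrow> ('x \<Rightarrow> 'y \<Rightarrow> real)
      \<Rightarrow> (nat \<Rightarrow> 'y) \<Rightarrow> nat \<Rightarrow> ((nat \<Rightarrow> nat) \<times> (nat \<Rightarrow> 'x)) set
      \<Rightarrow> ((nat \<Rightarrow> nat) \<times> (nat \<Rightarrow> 'x)) set \<Rightarrow> real" where
  "post n q J p y m F E =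
     (\<integral>\<omega>. indicator (E \<inter> F) \<omega> * lik p y m \<omega> \<partial>cp_joint n q J) /
     (\<integral>\<omega>. indicator F \<omega> * lik p y m \<omega> \<partial>cp_joint n q J)"

definition Hc :: "nat \<Rightarrow> (nat \<Rightarrow> nat \<Rightarrow> real) \<Rightarrow> 'x measure \<Rightarrow> ('x \<Rightarrow> 'y \<Rightarrow> real)
      \<Rightarrow> (nat \<Rightarrow> 'y) \<Rightarrow> nat \<Rightarrow> nat \<Rightarrow> 'x set \<Rightarrow> real" where
  "Hc n q J p y j i A = post n q J p y i {\<omega>. Cv i \<omega> = j} {\<omega>. Xv i \<omega> \<in> A}"

definition ct :: "nat \<Rightarrow> (nat \<Rightarrow> nat \<Rightarrow> real) \<Rightarrow> 'x measure \<Rightarrow> ('x \<Rightarrow> 'y \<Rightarrow> real)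
      \<Rightarrow> (nat \<Rightarrow> 'y) \<Rightarrow> nat \<Rightarrow> nat \<Rightarrow> real" where
  "ct n q J p y j i =
     (if i < n then post n q J p y i {\<omega>. Cv (i + 1) \<omega> = i + 1} {\<omega>. Cv i \<omega> = j}
      else post n q J p y n UNIV {\<omega>. Cv n \<omega> = j})"

definition qt :: "nat \<Rightarrow> (nat \<Rightarrow> nat \<Rightarrow> real) \<Rightarrow> 'x measure \<Rightarrow> ('x \<Rightarrow> 'y \<Rightarrow> real)
      \<Rightarrow> (nat \<Rightarrow> 'y) \<Rightarrow> nat \<Rightarrow> real" where
  "qt n q J p y i = post n q J p y n UNIV {\<omega>. Cv i \<omega> = i}"

end

theory Submission
  imports Defs
begin

text \<open>Conditioning on the changepoint path turns every probability into a finite sum over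
  paths, and given the path the likelihood factorises over segments, whose parameters are
  independent draws from J. On an admissible path X_i is the parameter of the segment containing
  i: either this segment lasts until n (so C_n = j \<le> i), or it ends at a unique l \<in> [i, n-1]
  with C_l = j \<le> i and C_{l+1} = l+1. This splits P(X_i \<in> A, Y_{1:n}) into one term per case.
  A changepoint at l+1 makes past and future independent, so the term for (j, l) factors as
  (1 - q_{j,l+1}) P(C_l = j, X_l \<in> A, Y_{1:l}) F_l, where F_l (future_mass l) is the evidence
  of y_{l+1:n} given a fresh segment at l+1. After division by P(Y_{1:n}) it telescopes into
  H_{jl}(A) c~_{jl} q~_{l+1}.\<close>

section \<open>Changepoint paths\<close>

definition trans_prob :: "(nat \<Rightarrow> nat \<Rightarrow> real) \<Rightarrow> nat \<Rightarrow> nat \<Rightarrow> nat \<Rightarrow> real" where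
  "trans_prob q i u v = (if v = u then q u i else if v = i then 1 - q u i else 0)"

lemma path_weight_eq_prod_trans_prob:
  "path_weight q m c = (\<Prod>i\<in>{1..m}. trans_prob q i (c (i - 1)) (c i))"
  unfolding path_weight_def trans_prob_def by (intro prod.cong) auto

lemma sum_trans_prob:
  assumes "u \<le> m"
  shows "(\<Sum>v\<in>{0..Suc m}. ennreal (trans_prob q (Suc m) u v) * h v) =
    ennreal (q u (Suc m)) * h u + ennreal (1 - q u (Suc m)) * h (Suc m)"
proof -
  have "(\<Sum>v\<in>{0..Suc m}. ennreal (trans_prob q (Suc m) u v) * h v) =
      (\<Sum>v\<in>{u, Suc m}. ennreal (trans_prob q (Suc m) u v) * h v)"
    by (rule sum.mono_neutral_right) (use assms in \<open>auto simp: trans_prob_def\<close>)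
  then show ?thesis using assms by (simp add: trans_prob_def)
qed

lemma cpaths_finite: "finite (cpaths m)"
proof -
  have "cpaths m \<subseteq> {f. \<forall>x. (x \<in> {1..m} \<longrightarrow> f x \<in> {0..m}) \<and> (x \<notin> {1..m} \<longrightarrow> f x = 0)}"
    unfolding cpaths_def by (auto intro: order.trans)
  then show ?thesis by (rule finite_subset) (intro finite_set_of_finite_funs; simp)
qed

lemma cpaths_le: "c \<in> cpaths m \<Longrightarrow> c k \<le> k"
  unfolding cpaths_def by (cases "k \<in> {1..m}") auto

lemma cpaths_zero: "c \<in> cpaths m \<Longrightarrow> c 0 = 0"
  unfolding cpaths_def by auto

lemma cpaths_beyond: "c \<in> cpaths m \<Longrightarrow> m < k \<Longrightarrow> c k = 0"
  unfolding cpaths_def by auto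

lemma cpaths_max_one:
  assumes "1 \<le> m" "c \<in> cpaths m"
  shows "max 1 (c k) \<in> {1..m}"
proof (cases "k \<in> {1..m}")
  case True
  then show ?thesis using assms cpaths_le[of c m k] by auto
next
  case False
  then show ?thesis using assms by (simp add: cpaths_def)
qed

definition path_prefix :: "nat \<Rightarrow> (nat \<Rightarrow> nat) \<Rightarrow> nat \<Rightarrow> nat" where
  "path_prefix m c = (\<lambda>k. if k \<le> m then c k else 0)"

lemma path_prefix_apply [simp]: "k \<le> m \<Longrightarrow> path_prefix m c k = c k"
  unfolding path_prefix_def by simp

lemma path_prefix_prefix: "m \<le> N \<Longrightarrow> path_prefix m (path_prefix N c) = path_prefix m c"
  unfolding path_prefix_def by auto

lemma path_prefix_in_cpaths: "c \<in> cpaths N \<Longrightarrow> m \<le> N \<Longrightarrow> path_prefix m c \<in> cpaths m"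
  unfolding cpaths_def path_prefix_def by auto

lemma path_prefix_cpaths: "c \<in> cpaths m \<Longrightarrow> path_prefix m c = c"
  using cpaths_beyond[of c m] by (auto simp: path_prefix_def fun_eq_iff)

lemma path_prefix_fun_upd: "a \<in> cpaths m \<Longrightarrow> path_prefix m (a(Suc m := v)) = a"
  using cpaths_beyond[of a m] by (auto simp: path_prefix_def fun_eq_iff)

lemma fun_upd_path_prefix:
  assumes "c \<in> cpaths (Suc m)"
  shows "(path_prefix m c)(Suc m := c (Suc m)) = c"
proof
  fix k
  show "((path_prefix m c)(Suc m := c (Suc m))) k = c k"
    using cpaths_beyond[OF assms, of k] by (cases "k \<le> m"; cases "k = Suc m") (auto simp: path_prefix_def)
qed

lemma fun_upd_in_cpaths:
  assumes a: "a \<in> cpaths m" and v: "v \<le> Suc m"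
  shows "a(Suc m := v) \<in> cpaths (Suc m)"
proof -
  have "(a(Suc m := v)) k \<le> k" for k
    using v cpaths_le[OF a, of k] by simp
  moreover have "(a(Suc m := v)) k = 0" if "k \<notin> {1..Suc m}" for k
  proof -
    have "k \<noteq> Suc m" "k \<notin> {1..m}" using that by auto
    then show ?thesis using a unfolding cpaths_def by simp
  qed
  ultimately show ?thesis unfolding cpaths_def by blast
qed

lemma path_weight_fun_upd:
  "path_weight q (Suc m) (a(Suc m := v)) = path_weight q m a * trans_prob q (Suc m) (a m) v"
proof -
  have "(\<Prod>i\<in>{1..m}. trans_prob q i ((a(Suc m := v)) (i - 1)) ((a(Suc m := v)) i)) =
      path_weight q m a"
    unfolding path_weight_eq_prod_trans_prob by (intro prod.cong) auto
  then show ?thesis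
    unfolding path_weight_eq_prod_trans_prob[of q "Suc m"]
    by (subst prod.nat_ivl_Suc') (simp_all add: mult.commute)
qed

definition admissible_path :: "nat \<Rightarrow> (nat \<Rightarrow> nat) \<Rightarrow> bool" where
  "admissible_path m c \<longleftrightarrow> (\<forall>i\<in>{1..m}. c i = c (i - 1) \<or> c i = i)"

lemma admissible_path_if_path_weight_nonzero:
  "path_weight q m c \<noteq> 0 \<Longrightarrow> admissible_path m c"
  unfolding path_weight_def admissible_path_def by (auto simp: prod_zero_iff split: if_splits)

lemma admissible_path_SucD:
  "admissible_path N c \<Longrightarrow> Suc k \<le> N \<Longrightarrow> c (Suc k) = c k \<or> c (Suc k) = Suc k"
  unfolding admissible_path_def by force

lemma admissible_path_changepoint_le:
  assumes "admissible_path N c" and "c (Suc l) = Suc l" and "Suc l \<le> k" "k \<le> N"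
  shows "Suc l \<le> c k"
  using assms(3,4)
proof (induction k rule: dec_induct)
  case (step k)
  then show ?case using admissible_path_SucD[OF assms(1), of k] by auto
qed (use assms(2) in simp)

text \<open>Either the segment containing \<open>i\<close> lasts until time \<open>m\<close>, or there is exactly one
  \<open>l \<in> [i, m)\<close> at which it ends (\<open>c l \<le> i\<close> and \<open>c (Suc l) = Suc l\<close>); either way it carries
  the label \<open>c i\<close>.\<close>
lemma admissible_path_decompose:
  fixes g :: "nat \<Rightarrow> 'a::comm_monoid_add"
  assumes c: "c \<in> cpaths N" and adm: "admissible_path N c" and "i \<le> m" "m \<le> N"
  shows "g (c i) = (if c m \<le> i then g (c m) else 0) +
    (\<Sum>l=i..<m. if c l \<le> i \<and> c (Suc l) = Suc l then g (c l) else 0)"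
  using assms(3,4)
proof (induction m rule: dec_induct)
  case base
  then show ?case using cpaths_le[OF c, of i] by simp
next
  case (step m)
  let ?F = "\<lambda>l. if c l \<le> i \<and> c (Suc l) = Suc l then g (c l) else 0"
  have "c (Suc m) = c m \<or> c (Suc m) = Suc m"
    using admissible_path_SucD[OF adm, of m] step.prems by simp
  then have split: "(if c m \<le> i then g (c m) else 0) =
      (if c (Suc m) \<le> i then g (c (Suc m)) else 0) + ?F m"
    using cpaths_le[OF c, of m] step.hyps by auto
  have "g (c i) = (if c m \<le> i then g (c m) else 0) + (\<Sum>l=i..<m. ?F l)"
    using step.IH step.prems by simp
  also have "\<dots> = (if c (Suc m) \<le> i then g (c (Suc m)) else 0) + ((\<Sum>l=i..<m. ?F l) + ?F m)"
    unfolding split by (simp only: ac_simps)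
  also have "(\<Sum>l=i..<m. ?F l) + ?F m = (\<Sum>l=i..<Suc m. ?F l)"
    by (rule sum.atLeastLessThan_Suc[symmetric]) (rule step.hyps(1))
  finally show ?case .
qed

definition path_suffix :: "nat \<Rightarrow> (nat \<Rightarrow> nat) \<Rightarrow> nat \<Rightarrow> nat" where
  "path_suffix l c = (\<lambda>k. if k \<le> l then 0 else c k)"

definition path_join :: "nat \<Rightarrow> (nat \<Rightarrow> nat) \<Rightarrow> (nat \<Rightarrow> nat) \<Rightarrow> nat \<Rightarrow> nat" where
  "path_join l a d = (\<lambda>k. if k \<le> l then a k else d k)"

definition future_paths :: "nat \<Rightarrow> nat \<Rightarrow> (nat \<Rightarrow> nat) set" where
  "future_paths n l = {d \<in> cpaths n. d (Suc l) = Suc l \<and> (\<forall>k\<le>l. d k = 0)}"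

lemma path_prefix_join: "a \<in> cpaths l \<Longrightarrow> path_prefix l (path_join l a d) = a"
  using cpaths_beyond[of a l] by (auto simp: path_prefix_def path_join_def fun_eq_iff)

lemma path_suffix_join: "d \<in> future_paths n l \<Longrightarrow> path_suffix l (path_join l a d) = d"
  by (auto simp: path_suffix_def path_join_def future_paths_def fun_eq_iff)

lemma path_join_prefix_suffix: "path_join l (path_prefix l c) (path_suffix l c) = c"
  by (simp add: path_join_def path_prefix_def path_suffix_def fun_eq_iff)

lemma path_join_in_cpaths:
  assumes "a \<in> cpaths l" "d \<in> future_paths n l" "l \<le> n"
  shows "path_join l a d \<in> cpaths n"
  using assms cpaths_le[of a l] cpaths_zero[of a l]
  unfolding cpaths_def future_paths_def path_join_def by auto

lemma path_suffix_in_future_paths: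
  "c \<in> cpaths n \<Longrightarrow> c (Suc l) = Suc l \<Longrightarrow> path_suffix l c \<in> future_paths n l"
  unfolding cpaths_def future_paths_def path_suffix_def by auto

definition future_path_weight :: "(nat \<Rightarrow> nat \<Rightarrow> real) \<Rightarrow> nat \<Rightarrow> nat \<Rightarrow> (nat \<Rightarrow> nat) \<Rightarrow> real" where
  "future_path_weight q n l d = (\<Prod>i\<in>{Suc (Suc l)..n}. trans_prob q i (d (i - 1)) (d i))"

lemma path_weight_join:
  assumes a: "a \<in> cpaths l" and d: "d (Suc l) = Suc l" and l: "Suc l \<le> n"
  shows "path_weight q n (path_join l a d) =
    path_weight q l a * (1 - q (a l) (Suc l)) * future_path_weight q n l d"
proof -
  let ?c = "path_join l a d"
  have "{1..n} = {1..l} \<union> {Suc l..n}" using l by auto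
  then have "path_weight q n ?c =
      (\<Prod>i\<in>{1..l}. trans_prob q i (?c (i - 1)) (?c i)) *
      trans_prob q (Suc l) (?c l) (?c (Suc l)) *
      (\<Prod>i\<in>{Suc (Suc l)..n}. trans_prob q i (?c (i - 1)) (?c i))"
    unfolding path_weight_eq_prod_trans_prob
    using l by (simp add: prod.union_disjoint prod.atLeast_Suc_atMost mult.assoc)
  moreover have "(\<Prod>i\<in>{1..l}. trans_prob q i (?c (i - 1)) (?c i)) = path_weight q l a"
    unfolding path_weight_eq_prod_trans_prob by (intro prod.cong) (auto simp: path_join_def)
  moreover have "trans_prob q (Suc l) (?c l) (?c (Suc l)) = 1 - q (a l) (Suc l)"
    using cpaths_le[OF a, of l] d by (simp add: path_join_def trans_prob_def)
  moreover have "(\<Prod>i\<in>{Suc (Suc l)..n}. trans_prob q i (?c (i - 1)) (?c i)) =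
      future_path_weight q n l d"
    unfolding future_path_weight_def by (intro prod.cong) (auto simp: path_join_def)
  ultimately show ?thesis by simp
qed

section \<open>Path weights\<close>

locale changepoint_prior =
  fixes n :: nat and q :: "nat \<Rightarrow> nat \<Rightarrow> real"
  assumes q_bounds: "\<And>j k. j < k \<Longrightarrow> k \<le> n \<Longrightarrow> 0 \<le> q j k \<and> q j k \<le> 1"
begin

lemma trans_prob_nonneg: "u < i \<Longrightarrow> i \<le> n \<Longrightarrow> 0 \<le> trans_prob q i u v"
  unfolding trans_prob_def using q_bounds[of u i] by auto

lemma path_weight_nonneg:
  assumes c: "c \<in> cpaths m" and "m \<le> n"
  shows "0 \<le> path_weight q m c"
  unfolding path_weight_eq_prod_trans_prob
proof (intro prod_nonneg trans_prob_nonneg)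
  fix i assume i: "i \<in> {1..m}"
  show "c (i - 1) < i" using cpaths_le[OF c, of "i - 1"] i by arith
  show "i \<le> n" using i assms(2) by simp
qed

lemma future_path_weight_nonneg:
  assumes d: "d \<in> cpaths n"
  shows "0 \<le> future_path_weight q n l d"
  unfolding future_path_weight_def
proof (intro prod_nonneg trans_prob_nonneg)
  fix i assume i: "i \<in> {Suc (Suc l)..n}"
  show "d (i - 1) < i" using cpaths_le[OF d, of "i - 1"] i by arith
  show "i \<le> n" using i by simp
qed

definition path_prob :: "nat \<Rightarrow> (nat \<Rightarrow> nat) \<Rightarrow> ennreal" where
  "path_prob m c = ennreal (path_weight q m c)"

lemma path_prob_fun_upd:
  assumes a: "a \<in> cpaths m" and m: "Suc m \<le> n"
  shows "path_prob (Suc m) (a(Suc m := v)) = path_prob m a * ennreal (trans_prob q (Suc m) (a m) v)"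
proof -
  have "0 \<le> trans_prob q (Suc m) (a m) v"
    using trans_prob_nonneg[of "a m" "Suc m"] cpaths_le[OF a, of m] m by simp
  then show ?thesis
    unfolding path_prob_def path_weight_fun_upd using path_weight_nonneg[OF a] m
    by (simp add: ennreal_mult)
qed

lemma path_prob_join:
  assumes a: "a \<in> cpaths l" and d: "d \<in> future_paths n l" and l: "Suc l \<le> n"
  shows "path_prob n (path_join l a d) =
    path_prob l a * ennreal (1 - q (a l) (Suc l)) * ennreal (future_path_weight q n l d)"
proof -
  have d_cp: "d (Suc l) = Suc l" "d \<in> cpaths n" using d by (auto simp: future_paths_def)
  have "0 \<le> 1 - q (a l) (Suc l)" using q_bounds[of "a l" "Suc l"] cpaths_le[OF a, of l] l by simp
  then show ?thesis
    unfolding path_prob_def path_weight_join[of a l d n q, OF a d_cp(1) l]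
    using path_weight_nonneg[OF a] future_path_weight_nonneg[OF d_cp(2)] l
    by (simp add: ennreal_mult)
qed

lemma sum_trans_prob_eq_one:
  assumes "u \<le> m" "Suc m \<le> n"
  shows "(\<Sum>v\<in>{0..Suc m}. ennreal (trans_prob q (Suc m) u v)) = 1"
proof -
  have "0 \<le> q u (Suc m)" "q u (Suc m) \<le> 1" using q_bounds[of u "Suc m"] assms by auto
  then show ?thesis using sum_trans_prob[OF assms(1), of q "\<lambda>_. 1"] by (simp flip: ennreal_plus)
qed

lemma sum_paths_Suc:
  assumes m: "Suc m \<le> n"
  shows "(\<Sum>c\<in>cpaths (Suc m). path_prob (Suc m) c * H (path_prefix m c) (c (Suc m))) =
    (\<Sum>a\<in>cpaths m. path_prob m a * (\<Sum>v\<in>{0..Suc m}. ennreal (trans_prob q (Suc m) (a m) v) * H a v))"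
proof -
  have "(\<Sum>c\<in>cpaths (Suc m). path_prob (Suc m) c * H (path_prefix m c) (c (Suc m))) =
      (\<Sum>(a, v)\<in>cpaths m \<times> {0..Suc m}. path_prob m a * (ennreal (trans_prob q (Suc m) (a m) v) * H a v))"
  proof (rule sum.reindex_bij_witness[where i="\<lambda>(a, v). a(Suc m := v)" and j="\<lambda>c. (path_prefix m c, c (Suc m))"])
    fix c assume c: "c \<in> cpaths (Suc m)"
    show "(case (path_prefix m c, c (Suc m)) of (a, v) \<Rightarrow> a(Suc m := v)) = c"
      using fun_upd_path_prefix[OF c] by simp
    show "(path_prefix m c, c (Suc m)) \<in> cpaths m \<times> {0..Suc m}"
      using path_prefix_in_cpaths[OF c] cpaths_le[OF c, of "Suc m"] by simp
    have "path_prob (Suc m) c = path_prob m (path_prefix m c) * ennreal (trans_prob q (Suc m) (c m) (c (Suc m)))"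
      using path_prob_fun_upd[OF path_prefix_in_cpaths[OF c] m, of "c (Suc m)"]
      by (simp add: fun_upd_path_prefix[OF c])
    then show "(case (path_prefix m c, c (Suc m)) of (a, v) \<Rightarrow>
        path_prob m a * (ennreal (trans_prob q (Suc m) (a m) v) * H a v)) =
        path_prob (Suc m) c * H (path_prefix m c) (c (Suc m))"
      by (simp add: mult.assoc)
  next
    fix b assume "b \<in> cpaths m \<times> {0..Suc m}"
    then obtain a v where b: "b = (a, v)" and a: "a \<in> cpaths m" and v: "v \<le> Suc m" by auto
    show "(\<lambda>c. (path_prefix m c, c (Suc m))) (case b of (a, v) \<Rightarrow> a(Suc m := v)) = b"
      using path_prefix_fun_upd[OF a] b by simp
    show "(case b of (a, v) \<Rightarrow> a(Suc m := v)) \<in> cpaths (Suc m)"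
      using fun_upd_in_cpaths[OF a v] b by simp
  qed
  also have "\<dots> = (\<Sum>a\<in>cpaths m. \<Sum>v\<in>{0..Suc m}. path_prob m a * (ennreal (trans_prob q (Suc m) (a m) v) * H a v))"
    by (rule sum.cartesian_product[symmetric])
  finally show ?thesis by (simp only: sum_distrib_left)
qed

lemma sum_path_prefix:
  assumes "m \<le> N" "N \<le> n"
  shows "(\<Sum>c\<in>cpaths N. path_prob N c * G (path_prefix m c)) = (\<Sum>a\<in>cpaths m. path_prob m a * G a)"
  using assms
proof (induction N rule: dec_induct)
  case base
  show ?case by (intro sum.cong refl) (simp add: path_prefix_cpaths)
next
  case (step N)
  have "(\<Sum>c\<in>cpaths (Suc N). path_prob (Suc N) c * G (path_prefix m c)) =
      (\<Sum>c\<in>cpaths (Suc N). path_prob (Suc N) c * G (path_prefix m (path_prefix N c)))"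
    using step.hyps by (simp add: path_prefix_prefix)
  also have "\<dots> = (\<Sum>a\<in>cpaths N. path_prob N a *
      (\<Sum>v\<in>{0..Suc N}. ennreal (trans_prob q (Suc N) (a N) v) * G (path_prefix m a)))"
    by (rule sum_paths_Suc[where H="\<lambda>a v. G (path_prefix m a)"]) (use step.prems in simp)
  also have "\<dots> = (\<Sum>a\<in>cpaths N. path_prob N a * G (path_prefix m a))"
  proof (intro sum.cong refl)
    fix a assume "a \<in> cpaths N"
    then have "(\<Sum>v\<in>{0..Suc N}. ennreal (trans_prob q (Suc N) (a N) v)) = 1"
      using sum_trans_prob_eq_one[OF cpaths_le step.prems] by blast
    then show "path_prob N a * (\<Sum>v\<in>{0..Suc N}. ennreal (trans_prob q (Suc N) (a N) v) * G (path_prefix m a)) =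
        path_prob N a * G (path_prefix m a)"
      by (simp add: sum_distrib_right[symmetric])
  qed
  also have "\<dots> = (\<Sum>a\<in>cpaths m. path_prob m a * G a)" using step by simp
  finally show ?case .
qed

lemma sum_changepoint_after:
  assumes l: "Suc l \<le> n"
  shows "(\<Sum>c\<in>cpaths n. path_prob n c * (if c (Suc l) = Suc l then G (path_prefix l c) else 0)) =
    (\<Sum>a\<in>cpaths l. path_prob l a * (ennreal (1 - q (a l) (Suc l)) * G a))"
proof -
  define H where "H a v = (if v = Suc l then G a else 0)" for a v
  have "(\<Sum>c\<in>cpaths n. path_prob n c * (if c (Suc l) = Suc l then G (path_prefix l c) else 0)) =
      (\<Sum>c\<in>cpaths n. path_prob n c * H (path_prefix l (path_prefix (Suc l) c)) (path_prefix (Suc l) c (Suc l)))"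
    by (simp add: H_def path_prefix_prefix)
  also have "\<dots> = (\<Sum>c\<in>cpaths (Suc l). path_prob (Suc l) c * H (path_prefix l c) (c (Suc l)))"
    by (rule sum_path_prefix[where G="\<lambda>c. H (path_prefix l c) (c (Suc l))"]) (use l in simp_all)
  also have "\<dots> = (\<Sum>a\<in>cpaths l. path_prob l a *
      (\<Sum>v\<in>{0..Suc l}. ennreal (trans_prob q (Suc l) (a l) v) * H a v))"
    by (rule sum_paths_Suc[OF l])
  also have "\<dots> = (\<Sum>a\<in>cpaths l. path_prob l a * (ennreal (1 - q (a l) (Suc l)) * G a))"
  proof (intro sum.cong refl)
    fix a assume a: "a \<in> cpaths l"
    then have "a l \<le> l" by (rule cpaths_le)
    then show "path_prob l a * (\<Sum>v\<in>{0..Suc l}. ennreal (trans_prob q (Suc l) (a l) v) * H a v) =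
        path_prob l a * (ennreal (1 - q (a l) (Suc l)) * G a)"
      by (simp add: sum_trans_prob H_def trans_prob_def)
  qed
  finally show ?thesis .
qed

lemma sum_split_at_changepoint:
  assumes l: "Suc l \<le> n"
  shows "(\<Sum>c\<in>cpaths n. path_prob n c *
      (if c (Suc l) = Suc l then G (path_prefix l c) * F (path_suffix l c) else 0)) =
    (\<Sum>a\<in>cpaths l. path_prob l a * (ennreal (1 - q (a l) (Suc l)) * G a)) *
    (\<Sum>d\<in>future_paths n l. ennreal (future_path_weight q n l d) * F d)"
proof -
  have "(\<Sum>c\<in>cpaths n. path_prob n c *
      (if c (Suc l) = Suc l then G (path_prefix l c) * F (path_suffix l c) else 0)) =
      (\<Sum>c\<in>{c\<in>cpaths n. c (Suc l) = Suc l}. path_prob n c * (G (path_prefix l c) * F (path_suffix l c)))"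
    by (simp only: sum.inter_filter[OF cpaths_finite]) (intro sum.cong refl; simp)
  also have "\<dots> = (\<Sum>(a, d)\<in>cpaths l \<times> future_paths n l.
      (path_prob l a * ennreal (1 - q (a l) (Suc l)) * ennreal (future_path_weight q n l d)) * (G a * F d))"
  proof (rule sum.reindex_bij_witness[where i="\<lambda>(a, d). path_join l a d" and j="\<lambda>c. (path_prefix l c, path_suffix l c)"])
    fix c assume "c \<in> {c\<in>cpaths n. c (Suc l) = Suc l}"
    then have c: "c \<in> cpaths n" "c (Suc l) = Suc l" by auto
    show "(case (path_prefix l c, path_suffix l c) of (a, d) \<Rightarrow> path_join l a d) = c"
      by (simp add: path_join_prefix_suffix)
    show "(path_prefix l c, path_suffix l c) \<in> cpaths l \<times> future_paths n l"
      using path_prefix_in_cpaths[OF c(1)] path_suffix_in_future_paths[OF c] l by simp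
    have "path_prob n c = path_prob l (path_prefix l c) * ennreal (1 - q (c l) (Suc l)) *
        ennreal (future_path_weight q n l (path_suffix l c))"
      using path_prob_join[OF path_prefix_in_cpaths[OF c(1)] path_suffix_in_future_paths[OF c] l] l
      by (simp add: path_join_prefix_suffix)
    then show "(case (path_prefix l c, path_suffix l c) of (a, d) \<Rightarrow>
        (path_prob l a * ennreal (1 - q (a l) (Suc l)) * ennreal (future_path_weight q n l d)) * (G a * F d)) =
        path_prob n c * (G (path_prefix l c) * F (path_suffix l c))"
      by simp
  next
    fix b assume "b \<in> cpaths l \<times> future_paths n l"
    then obtain a d where b: "b = (a, d)" and a: "a \<in> cpaths l" and d: "d \<in> future_paths n l" by auto
    show "(\<lambda>c. (path_prefix l c, path_suffix l c)) (case b of (a, d) \<Rightarrow> path_join l a d) = b"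
      using path_prefix_join[OF a] path_suffix_join[OF d] b by simp
    have "path_join l a d (Suc l) = Suc l" using d by (simp add: path_join_def future_paths_def)
    then show "(case b of (a, d) \<Rightarrow> path_join l a d) \<in> {c\<in>cpaths n. c (Suc l) = Suc l}"
      using path_join_in_cpaths[OF a d] l b by simp
  qed
  also have "\<dots> = (\<Sum>a\<in>cpaths l. \<Sum>d\<in>future_paths n l.
      (path_prob l a * (ennreal (1 - q (a l) (Suc l)) * G a)) * (ennreal (future_path_weight q n l d) * F d))"
    by (subst sum.cartesian_product) (simp add: ac_simps)
  finally show ?thesis by (simp only: sum_product)
qed

end

section \<open>Likelihood integrals\<close>

locale changepoint_model = changepoint_prior n q
  for n :: nat and q :: "nat \<Rightarrow> nat \<Rightarrow> real" +
  fixes J :: "'x::topological_space measure" and p :: "'x \<Rightarrow> 'y::topological_space \<Rightarrow> real"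
    and y :: "nat \<Rightarrow> 'y"
  assumes n_pos: "1 \<le> n" and prob_J: "prob_space J" and sets_J: "sets J = sets borel"
    and p_measurable: "(\<lambda>(x, v). p x v) \<in> borel_measurable (borel \<Otimes>\<^sub>M borel)"
    and p_nonneg: "\<And>x v. 0 \<le> p x v"
begin

abbreviation param_space :: "(nat \<Rightarrow> 'x) measure" where
  "param_space \<equiv> PiM {1..n} (\<lambda>_. J)"

lemma p_measurable_fst: "(\<lambda>x. p x v) \<in> borel_measurable J"
proof -
  have "(\<lambda>x. (\<lambda>(x, v). p x v) (x, v)) \<in> borel_measurable borel"
    by (rule measurable_compose[OF _ p_measurable]) auto
  then show ?thesis by (simp add: measurable_cong_sets[OF sets_J refl])
qed

lemma indicator_measurable_J: "B \<in> sets borel \<Longrightarrow> (indicator B :: 'x \<Rightarrow> real) \<in> borel_measurable J"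
  using sets_J by (metis borel_measurable_indicator measurable_cong_sets)

lemma lik_nonneg: "0 \<le> lik p y m \<omega>"
  unfolding lik_def by (intro prod_nonneg) (auto intro: p_nonneg)

definition path_evidence :: "nat \<Rightarrow> nat \<Rightarrow> 'x set \<Rightarrow> (nat \<Rightarrow> nat) \<Rightarrow> ennreal" where
  "path_evidence m k B c =
    (\<integral>\<^sup>+z. ennreal (indicator B (z (max 1 (c k))) * lik p y m (c, z)) \<partial>param_space)"

definition joint_mass :: "nat \<Rightarrow> ((nat \<Rightarrow> nat) \<Rightarrow> bool) \<Rightarrow> nat \<Rightarrow> 'x set \<Rightarrow> ennreal" where
  "joint_mass m P k B =
    (\<integral>\<^sup>+\<omega>. ennreal (indicator ({\<omega>. P (fst \<omega>)} \<inter> {\<omega>. Xv k \<omega> \<in> B}) \<omega> * lik p y m \<omega>) \<partial>cp_joint n q J)"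

lemma path_integrand_measurable:
  assumes c: "c \<in> cpaths n" and B: "B \<in> sets borel"
  shows "(\<lambda>z. indicator B (z (max 1 (c k))) * lik p y m (c, z)) \<in> borel_measurable param_space"
proof -
  have comp: "(\<lambda>z. z (max 1 (c l))) \<in> measurable param_space J" for l
    using cpaths_max_one[OF n_pos c] by (intro measurable_component_singleton) auto
  have "(\<lambda>z. lik p y m (c, z)) \<in> borel_measurable param_space"
    unfolding lik_def Xv_def fst_conv snd_conv
    by (intro borel_measurable_prod measurable_compose[OF comp p_measurable_fst])
  then show ?thesis
    using measurable_compose[OF comp indicator_measurable_J[OF B]] by measurable
qed

lemma joint_integrand_eq:
  "indicator ({\<omega>. P (fst \<omega>)} \<inter> {\<omega>. Xv k \<omega> \<in> B}) \<omega> * lik p y m \<omega> =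
   (if P (fst \<omega>) then indicator B (snd \<omega> (max 1 (fst \<omega> k))) * lik p y m (fst \<omega>, snd \<omega>) else 0)"
  by (cases \<omega>) (auto simp: Xv_def indicator_def)

lemma joint_integrand_measurable:
  assumes B: "B \<in> sets borel"
  shows "(\<lambda>\<omega>. indicator ({\<omega>. P (fst \<omega>)} \<inter> {\<omega>. Xv k \<omega> \<in> B}) \<omega> * lik p y m \<omega>)
    \<in> borel_measurable (cp_joint n q J)"
  unfolding joint_integrand_eq
proof (rule measurable_compose_countable'[where f="\<lambda>c \<omega>. if P c then indicator B (snd \<omega> (max 1 (c k))) *
    lik p y m (c, snd \<omega>) else 0"])
  fix c assume c: "c \<in> cpaths n"
  show "(\<lambda>\<omega>. if P c then indicator B (snd \<omega> (max 1 (c k))) * lik p y m (c, snd \<omega>) else 0)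
      \<in> borel_measurable (cp_joint n q J)"
    unfolding cp_joint_def
    using measurable_compose[OF measurable_snd path_integrand_measurable[OF c B, of k m]]
    by (cases "P c") simp_all
next
  have "fst \<in> measurable (cp_joint n q J)
      (density (count_space (cpaths n)) (\<lambda>c. ennreal (path_weight q n c)))"
    unfolding cp_joint_def by (rule measurable_fst)
  then show "fst \<in> measurable (cp_joint n q J) (count_space (cpaths n))"
    by (simp add: measurable_cong_sets[OF refl sets_density])
qed (simp add: countable_finite cpaths_finite)

lemma joint_mass_eq_sum:
  assumes B: "B \<in> sets borel"
  shows "joint_mass m P k B = (\<Sum>c\<in>cpaths n. path_prob n c * (if P c then path_evidence m k B c else 0))"
proof -
  interpret param: prob_space param_space by (intro prob_space_PiM prob_J)
  let ?C = "density (count_space (cpaths n)) (\<lambda>c. ennreal (path_weight q n c))"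
  let ?f = "\<lambda>\<omega>. ennreal (indicator ({\<omega>. P (fst \<omega>)} \<inter> {\<omega>. Xv k \<omega> \<in> B}) \<omega> * lik p y m \<omega>)"
  have "?f \<in> borel_measurable (?C \<Otimes>\<^sub>M param_space)"
    using joint_integrand_measurable[OF B, of P k m] unfolding cp_joint_def by measurable
  then have "joint_mass m P k B = (\<integral>\<^sup>+c. \<integral>\<^sup>+z. ?f (c, z) \<partial>param_space \<partial>?C)"
    unfolding joint_mass_def cp_joint_def by (rule param.nn_integral_fst[symmetric])
  also have "\<dots> = (\<integral>\<^sup>+c. ennreal (path_weight q n c) * (\<integral>\<^sup>+z. ?f (c, z) \<partial>param_space) \<partial>count_space (cpaths n))"
    by (rule nn_integral_density) auto
  also have "\<dots> = (\<Sum>c\<in>cpaths n. ennreal (path_weight q n c) * (\<integral>\<^sup>+z. ?f (c, z) \<partial>param_space))"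
    by (rule nn_integral_count_space_finite[OF cpaths_finite])
  also have "\<dots> = (\<Sum>c\<in>cpaths n. path_prob n c * (if P c then path_evidence m k B c else 0))"
    unfolding path_prob_def path_evidence_def joint_integrand_eq by (intro sum.cong refl) auto
  finally show ?thesis .
qed

lemma integral_eq_joint_mass:
  assumes "B \<in> sets borel"
  shows "(\<integral>\<omega>. indicator ({\<omega>. P (fst \<omega>)} \<inter> {\<omega>. Xv k \<omega> \<in> B}) \<omega> * lik p y m \<omega> \<partial>cp_joint n q J) =
    enn2real (joint_mass m P k B)"
  unfolding joint_mass_def
  by (rule integral_eq_nn_integral[OF joint_integrand_measurable[OF assms]])
    (auto intro!: AE_I2 mult_nonneg_nonneg lik_nonneg)

lemma post_eq_joint_mass_ratio:
  assumes "E \<inter> F = {\<omega>. P (fst \<omega>)} \<inter> {\<omega>. Xv k \<omega> \<in> B}" and "F = {\<omega>. P' (fst \<omega>)} \<inter> {\<omega>. Xv k' \<omega> \<in> B'}"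
    and "B \<in> sets borel" and "B' \<in> sets borel"
  shows "post n q J p y m F E = enn2real (joint_mass m P k B) / enn2real (joint_mass m P' k' B')"
proof -
  have "post n q J p y m F E =
      (\<integral>\<omega>. indicator ({\<omega>. P (fst \<omega>)} \<inter> {\<omega>. Xv k \<omega> \<in> B}) \<omega> * lik p y m \<omega> \<partial>cp_joint n q J) /
      (\<integral>\<omega>. indicator ({\<omega>. P' (fst \<omega>)} \<inter> {\<omega>. Xv k' \<omega> \<in> B'}) \<omega> * lik p y m \<omega> \<partial>cp_joint n q J)"
    unfolding post_def assms(1) by (simp only: assms(2)[symmetric])
  then show ?thesis by (simp only: integral_eq_joint_mass assms(3,4))
qed

definition segment_factor :: "nat \<Rightarrow> nat \<Rightarrow> 'x set \<Rightarrow> (nat \<Rightarrow> nat) \<Rightarrow> nat \<Rightarrow> ennreal" where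
  "segment_factor m k B c s = (\<integral>\<^sup>+x. ennreal ((if s = max 1 (c k) then indicator B x else 1) *
    (\<Prod>l\<in>{l\<in>{1..m}. max 1 (c l) = s}. p x (y l))) \<partial>J)"

text \<open>Given the path, the likelihood is a product over segments, each involving only the
  parameter drawn at the start of that segment; independence of these parameters factorises
  the integral.\<close>
lemma path_evidence_eq_prod_segment_factor:
  assumes c: "c \<in> cpaths n" and B: "B \<in> sets borel"
  shows "path_evidence m k B c = (\<Prod>s\<in>{1..n}. segment_factor m k B c s)"
proof -
  interpret product_sigma_finite "\<lambda>_. J"
    unfolding product_sigma_finite_def using prob_J by (simp add: prob_space_imp_sigma_finite)
  define s0 where "s0 = max 1 (c k)"
  have s0: "s0 \<in> {1..n}" unfolding s0_def by (rule cpaths_max_one[OF n_pos c])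
  define g where "g s x = (if s = s0 then indicator B x else 1) *
    (\<Prod>l\<in>{l\<in>{1..m}. max 1 (c l) = s}. p x (y l))" for s x
  have g_nonneg: "0 \<le> g s x" for s x unfolding g_def
    by (intro mult_nonneg_nonneg prod_nonneg) (auto intro: p_nonneg)
  have "(\<Prod>s\<in>{1..n}. g s (z s)) = indicator B (z s0) * lik p y m (c, z)" for z
  proof -
    have "(\<Prod>s\<in>{1..n}. g s (z s)) = (\<Prod>s\<in>{1..n}. (if s = s0 then indicator B (z s) else 1)) *
        (\<Prod>s\<in>{1..n}. \<Prod>l\<in>{l\<in>{1..m}. max 1 (c l) = s}. p (z s) (y l))"
      unfolding g_def by (rule prod.distrib)
    also have "(\<Prod>s\<in>{1..n}. (if s = s0 then indicator B (z s) else 1)) = indicator B (z s0)"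
      using s0 by (simp add: prod.delta)
    also have "(\<Prod>s\<in>{1..n}. \<Prod>l\<in>{l\<in>{1..m}. max 1 (c l) = s}. p (z s) (y l)) =
        (\<Prod>s\<in>{1..n}. \<Prod>l\<in>{l\<in>{1..m}. max 1 (c l) = s}. p (z (max 1 (c l))) (y l))"
      by (intro prod.cong refl) auto
    also have "\<dots> = (\<Prod>l\<in>{1..m}. p (z (max 1 (c l))) (y l))"
      by (rule prod.group) (use cpaths_max_one[OF n_pos c] in auto)
    finally show ?thesis unfolding lik_def Xv_def by simp
  qed
  then have "path_evidence m k B c = (\<integral>\<^sup>+z. (\<Prod>s\<in>{1..n}. ennreal (g s (z s))) \<partial>param_space)"
    unfolding path_evidence_def s0_def using g_nonneg by (simp add: prod_ennreal)
  also have "\<dots> = (\<Prod>s\<in>{1..n}. \<integral>\<^sup>+x. ennreal (g s x) \<partial>J)"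
    using indicator_measurable_J[OF B] p_measurable_fst
    by (intro product_nn_integral_prod) (auto simp: g_def)
  finally show ?thesis unfolding segment_factor_def g_def s0_def .
qed

end

context changepoint_model
begin

lemma path_evidence_prefix:
  assumes "k \<le> m"
  shows "path_evidence m k B (path_prefix m c) = path_evidence m k B c"
proof -
  have "lik p y m (path_prefix m c, z) = lik p y m (c, z)" for z
    unfolding lik_def Xv_def by (intro prod.cong refl) simp
  then show ?thesis unfolding path_evidence_def using assms by simp
qed

lemma path_evidence_mono_set: "path_evidence m k A c \<le> path_evidence m k UNIV c"
  unfolding path_evidence_def
  by (intro nn_integral_mono ennreal_leI) (auto simp: indicator_def intro: lik_nonneg)

definition future_evidence :: "nat \<Rightarrow> (nat \<Rightarrow> nat) \<Rightarrow> ennreal" where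
  "future_evidence l d = (\<Prod>s\<in>{Suc l..n}. \<integral>\<^sup>+x. ennreal (\<Prod>k\<in>{k\<in>{1..n}. d k = s}. p x (y k)) \<partial>J)"

definition future_mass :: "nat \<Rightarrow> ennreal" where
  "future_mass l = (\<Sum>d\<in>future_paths n l. ennreal (future_path_weight q n l d) * future_evidence l d)"

lemma segment_factor_unvisited:
  assumes c: "c \<in> cpaths n" and "1 \<le> m" "k \<le> m" "m < s"
  shows "segment_factor m k B c s = 1"
proof -
  interpret J: prob_space J by (rule prob_J)
  have "max 1 (c l) \<le> m" if "l \<le> m" for l using cpaths_le[OF c, of l] that assms(2) by auto
  then have empty: "{l\<in>{1..m}. max 1 (c l) = s} = {}" and "s \<noteq> max 1 (c k)"
    using assms(3,4) by fastforce+
  then show ?thesis unfolding segment_factor_def empty by (simp add: J.emeasure_space_1)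
qed

text \<open>Segments starting after a changepoint at \<open>Suc l\<close> see only the observations after \<open>l\<close>,
  and those before it see only the observations up to \<open>l\<close>.\<close>
lemma path_evidence_split:
  assumes c: "c \<in> cpaths n" and adm: "admissible_path n c" and cp: "c (Suc l) = Suc l"
    and l: "Suc l \<le> n" and k: "1 \<le> k" "k \<le> l" and B: "B \<in> sets borel"
  shows "path_evidence n k B c = path_evidence l k B (path_prefix l c) * future_evidence l (path_suffix l c)"
proof -
  have ivl: "{1..n} = {1..l} \<union> {Suc l..n}" using l by auto
  have ck: "max 1 (c k) \<le> l" using cpaths_le[OF c, of k] k by simp
  have past: "segment_factor n k B c s = segment_factor l k B c s" if s: "s \<in> {1..l}" for s
  proof -
    have "Suc l \<le> c m" if "m \<in> {1..n}" "l < m" for m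
      using admissible_path_changepoint_le[OF adm cp, of m] that by simp
    then have "{m\<in>{1..n}. max 1 (c m) = s} = {m\<in>{1..l}. max 1 (c m) = s}"
      using s l by (force simp: not_le)
    then show ?thesis unfolding segment_factor_def by simp
  qed
  have future: "segment_factor n k B c s =
      (\<integral>\<^sup>+x. ennreal (\<Prod>m\<in>{m\<in>{1..n}. path_suffix l c m = s}. p x (y m)) \<partial>J)"
    if s: "s \<in> {Suc l..n}" for s
  proof -
    have "max 1 (c m) = s \<longleftrightarrow> path_suffix l c m = s" if "m \<in> {1..n}" for m
      using cpaths_le[OF c, of m] that s k by (auto simp: path_suffix_def)
    then have "{m\<in>{1..n}. max 1 (c m) = s} = {m\<in>{1..n}. path_suffix l c m = s}" by blast
    moreover have "s \<noteq> max 1 (c k)" using ck s by auto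
    ultimately show ?thesis unfolding segment_factor_def by simp
  qed
  have "path_evidence n k B c =
      (\<Prod>s\<in>{1..l}. segment_factor n k B c s) * (\<Prod>s\<in>{Suc l..n}. segment_factor n k B c s)"
    unfolding path_evidence_eq_prod_segment_factor[OF c B] ivl by (rule prod.union_disjoint) auto
  also have "(\<Prod>s\<in>{Suc l..n}. segment_factor n k B c s) = future_evidence l (path_suffix l c)"
    unfolding future_evidence_def by (intro prod.cong refl future) auto
  also have "(\<Prod>s\<in>{1..l}. segment_factor n k B c s) =
      (\<Prod>s\<in>{1..l}. segment_factor l k B c s) * (\<Prod>s\<in>{Suc l..n}. segment_factor l k B c s)"
    using past segment_factor_unvisited[OF c _ k(2)] k by simp
  also have "\<dots> = path_evidence l k B c"
    unfolding path_evidence_eq_prod_segment_factor[OF c B] ivl by (rule prod.union_disjoint[symmetric]) auto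
  finally show ?thesis using path_evidence_prefix[OF k(2)] by simp
qed

lemma admissible_path_if_path_prob_nonzero: "path_prob m c \<noteq> 0 \<Longrightarrow> admissible_path m c"
  unfolding path_prob_def by (rule admissible_path_if_path_weight_nonzero[of q]) auto

lemma joint_mass_eq_sum_prefix:
  assumes m: "m \<le> n" and k: "k \<le> m" and P: "\<And>c. P (path_prefix m c) = P c" and B: "B \<in> sets borel"
  shows "joint_mass m P k B = (\<Sum>a\<in>cpaths m. path_prob m a * (if P a then path_evidence m k B a else 0))"
proof -
  define G where "G a = (if P a then path_evidence m k B a else 0)" for a
  have "joint_mass m P k B = (\<Sum>c\<in>cpaths n. path_prob n c * G (path_prefix m c))"
    unfolding joint_mass_eq_sum[OF B] G_def by (intro sum.cong refl) (simp add: P path_evidence_prefix[OF k])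
  also have "\<dots> = (\<Sum>a\<in>cpaths m. path_prob m a * G a)"
    by (rule sum_path_prefix[OF m order.refl])
  finally show ?thesis unfolding G_def .
qed

lemma joint_mass_changepoint_after:
  assumes l: "Suc l \<le> n" and k: "k \<le> l" and P: "\<And>c. P (path_prefix l c) = P c" and B: "B \<in> sets borel"
  shows "joint_mass l (\<lambda>c. P c \<and> c (Suc l) = Suc l) k B =
    (\<Sum>a\<in>cpaths l. path_prob l a * (ennreal (1 - q (a l) (Suc l)) *
      (if P a then path_evidence l k B a else 0)))"
proof -
  define G where "G a = (if P a then path_evidence l k B a else 0)" for a
  have "joint_mass l (\<lambda>c. P c \<and> c (Suc l) = Suc l) k B =
      (\<Sum>c\<in>cpaths n. path_prob n c * (if c (Suc l) = Suc l then G (path_prefix l c) else 0))"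
    unfolding joint_mass_eq_sum[OF B] G_def by (intro sum.cong refl) (simp add: P path_evidence_prefix[OF k])
  also have "\<dots> = (\<Sum>a\<in>cpaths l. path_prob l a * (ennreal (1 - q (a l) (Suc l)) * G a))"
    by (rule sum_changepoint_after[OF l])
  finally show ?thesis unfolding G_def .
qed

lemma joint_mass_changepoint_factor:
  assumes l: "Suc l \<le> n" and B: "B \<in> sets borel"
  shows "joint_mass l (\<lambda>c. c l = j \<and> c (Suc l) = Suc l) l B =
    ennreal (1 - q j (Suc l)) * joint_mass l (\<lambda>c. c l = j) l B"
proof -
  have "joint_mass l (\<lambda>c. c l = j \<and> c (Suc l) = Suc l) l B =
      (\<Sum>a\<in>cpaths l. path_prob l a * (ennreal (1 - q (a l) (Suc l)) *
        (if a l = j then path_evidence l l B a else 0)))"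
    by (rule joint_mass_changepoint_after[where P="\<lambda>c. c l = j", OF l order.refl _ B]) simp
  also have "\<dots> = ennreal (1 - q j (Suc l)) *
      (\<Sum>a\<in>cpaths l. path_prob l a * (if a l = j then path_evidence l l B a else 0))"
    unfolding sum_distrib_left by (intro sum.cong refl) (simp add: ac_simps)
  also have "(\<Sum>a\<in>cpaths l. path_prob l a * (if a l = j then path_evidence l l B a else 0)) =
      joint_mass l (\<lambda>c. c l = j) l B"
    by (rule joint_mass_eq_sum_prefix[symmetric]) (use l B in simp_all)
  finally show ?thesis .
qed

lemma joint_mass_split_at_changepoint:
  assumes l: "Suc l \<le> n" and k: "1 \<le> k" "k \<le> l" and P: "\<And>c. P (path_prefix l c) = P c"
    and B: "B \<in> sets borel"
  shows "joint_mass n (\<lambda>c. P c \<and> c (Suc l) = Suc l) k B =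
    joint_mass l (\<lambda>c. P c \<and> c (Suc l) = Suc l) k B * future_mass l"
proof -
  define G where "G a = (if P a then path_evidence l k B a else 0)" for a
  have "joint_mass n (\<lambda>c. P c \<and> c (Suc l) = Suc l) k B =
      (\<Sum>c\<in>cpaths n. path_prob n c *
        (if c (Suc l) = Suc l then G (path_prefix l c) * future_evidence l (path_suffix l c) else 0))"
    unfolding joint_mass_eq_sum[OF B]
  proof (intro sum.cong refl)
    fix c assume c: "c \<in> cpaths n"
    show "path_prob n c * (if P c \<and> c (Suc l) = Suc l then path_evidence n k B c else 0) =
        path_prob n c * (if c (Suc l) = Suc l then G (path_prefix l c) * future_evidence l (path_suffix l c) else 0)"
    proof (cases "path_prob n c = 0 \<or> c (Suc l) \<noteq> Suc l")
      case False
      then have "admissible_path n c" "c (Suc l) = Suc l"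
        using admissible_path_if_path_prob_nonzero by auto
      then show ?thesis using path_evidence_split[OF c _ _ l k B] by (simp add: G_def P)
    qed auto
  qed
  also have "\<dots> = (\<Sum>a\<in>cpaths l. path_prob l a * (ennreal (1 - q (a l) (Suc l)) * G a)) * future_mass l"
    unfolding future_mass_def by (rule sum_split_at_changepoint[OF l])
  also have "(\<Sum>a\<in>cpaths l. path_prob l a * (ennreal (1 - q (a l) (Suc l)) * G a)) =
      joint_mass l (\<lambda>c. P c \<and> c (Suc l) = Suc l) k B"
    unfolding G_def by (rule joint_mass_changepoint_after[of l k P B, OF l k(2) P B, symmetric])
  finally show ?thesis .
qed

lemma path_evidence_decompose:
  assumes c: "c \<in> cpaths n" and adm: "admissible_path n c" and i: "i \<le> n"
  shows "path_evidence n i A c = (\<Sum>j=0..i. if c n = j then path_evidence n n A c else 0) +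
    (\<Sum>j=0..i. \<Sum>l=i..n-1. if c l = j \<and> c (Suc l) = Suc l then path_evidence n l A c else 0)"
proof -
  define g where "g s = (\<integral>\<^sup>+z. ennreal (indicator A (z (max 1 s)) * lik p y n (c, z)) \<partial>param_space)" for s
  have g: "path_evidence n k A c = g (c k)" for k unfolding g_def path_evidence_def ..
  have "{i..n-1} = {i..<n}" using n_pos by auto
  then have "(\<Sum>j=0..i. \<Sum>l=i..n-1. if c l = j \<and> c (Suc l) = Suc l then g (c l) else 0) =
      (\<Sum>l=i..<n. \<Sum>j=0..i. if c l = j \<and> c (Suc l) = Suc l then g (c l) else 0)"
    by (simp only: sum.swap[of _ "{i..<n}" "{0..i}"])
  also have "\<dots> = (\<Sum>l=i..<n. if c l \<le> i \<and> c (Suc l) = Suc l then g (c l) else 0)"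
    by (intro sum.cong refl) (simp add: sum.delta' if_distrib[of "\<lambda>b. b \<and> _"])
  finally show ?thesis
    using admissible_path_decompose[OF c adm i order.refl, of g] unfolding g by (simp add: sum.delta')
qed

lemma joint_mass_decompose:
  assumes i: "i \<le> n" and A: "A \<in> sets borel"
  shows "joint_mass n (\<lambda>_. True) i A = (\<Sum>j=0..i. joint_mass n (\<lambda>c. c n = j) n A) +
    (\<Sum>j=0..i. \<Sum>l=i..n-1. joint_mass n (\<lambda>c. c l = j \<and> c (Suc l) = Suc l) l A)"
proof -
  define f where "f j c = (if c n = j then path_evidence n n A c else 0)" for j c
  define h where "h j l c = (if c l = j \<and> c (Suc l) = Suc l then path_evidence n l A c else 0)" for j l c
  have "joint_mass n (\<lambda>_. True) i A =
      (\<Sum>c\<in>cpaths n. path_prob n c * (\<Sum>j=0..i. f j c) + path_prob n c * (\<Sum>j=0..i. \<Sum>l=i..n-1. h j l c))"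
    unfolding joint_mass_eq_sum[OF A]
  proof (intro sum.cong refl)
    fix c assume c: "c \<in> cpaths n"
    show "path_prob n c * (if True then path_evidence n i A c else 0) =
        path_prob n c * (\<Sum>j=0..i. f j c) + path_prob n c * (\<Sum>j=0..i. \<Sum>l=i..n-1. h j l c)"
      using path_evidence_decompose[OF c admissible_path_if_path_prob_nonzero i, of A]
      by (cases "path_prob n c = 0") (simp_all add: f_def h_def distrib_left)
  qed
  also have "\<dots> = (\<Sum>j=0..i. \<Sum>c\<in>cpaths n. path_prob n c * f j c) +
      (\<Sum>j=0..i. \<Sum>l=i..n-1. \<Sum>c\<in>cpaths n. path_prob n c * h j l c)"
  proof -
    have "(\<Sum>c\<in>cpaths n. path_prob n c * (\<Sum>j=0..i. f j c)) =
        (\<Sum>j=0..i. \<Sum>c\<in>cpaths n. path_prob n c * f j c)"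
      unfolding sum_distrib_left by (rule sum.swap)
    moreover have "(\<Sum>c\<in>cpaths n. path_prob n c * (\<Sum>j=0..i. \<Sum>l=i..n-1. h j l c)) =
        (\<Sum>j=0..i. \<Sum>l=i..n-1. \<Sum>c\<in>cpaths n. path_prob n c * h j l c)"
      unfolding sum_distrib_left by (subst sum.swap) (intro sum.cong refl sum.swap)
    ultimately show ?thesis by (simp only: sum.distrib)
  qed
  finally show ?thesis
    unfolding joint_mass_eq_sum[OF A] f_def h_def by simp
qed

end

section \<open>Posterior probabilities as ratios\<close>

lemma enn2real_divide_factor:
  fixes x u D :: ennreal
  assumes "x \<le> u" "u \<le> D" "D < \<top>"
  shows "enn2real x / enn2real D = enn2real x / enn2real u * (enn2real u / enn2real D)"
proof (cases "u = 0")
  case True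
  then show ?thesis using assms(1) by simp
next
  case False
  moreover have "u < \<top>" using assms(2,3) by (rule le_less_trans)
  ultimately have "0 < enn2real u" by (simp add: enn2real_positive_iff less_top[symmetric] zero_less_iff_neq_zero)
  then show ?thesis by simp
qed

lemma enn2real_divide_factor3:
  fixes a u b s Y D :: ennreal
  assumes au: "a \<le> u" and b: "b < \<top>" and bus: "b * u \<le> s" and sYD: "s * Y \<le> D" and D: "D < \<top>"
  shows "enn2real (b * a * Y) / enn2real D =
    enn2real a / enn2real u * (enn2real (b * u) / enn2real s) * (enn2real (s * Y) / enn2real D)"
proof (cases "Y = 0 \<or> b = 0 \<or> u = 0")
  case True
  then show ?thesis using au by auto
next
  case False
  have "s * Y < \<top>" using sYD D by (rule le_less_trans)
  moreover have "s \<noteq> 0" using bus False by (auto simp: le_zero_eq)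
  ultimately have s: "s < \<top>" using False by (auto simp: ennreal_mult_less_top)
  then have "b * u < \<top>" using bus by (rule le_less_trans[rotated])
  then have "u < \<top>" using False by (auto simp: ennreal_mult_less_top)
  then have "0 < enn2real u" "0 < enn2real s"
    using False s \<open>s \<noteq> 0\<close> by (auto simp: enn2real_positive_iff less_top[symmetric] zero_less_iff_neq_zero)
  then show ?thesis by (simp add: enn2real_mult field_simps)
qed

context changepoint_model
begin

abbreviation evidence :: ennreal where
  "evidence \<equiv> joint_mass n (\<lambda>_. True) n UNIV"

lemma joint_mass_mono_pred:
  assumes "\<And>c. P c \<Longrightarrow> P' c" and "B \<in> sets borel"
  shows "joint_mass m P k B \<le> joint_mass m P' k B"
  unfolding joint_mass_eq_sum[OF assms(2)] using assms(1) by (intro sum_mono mult_left_mono) auto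

lemma joint_mass_mono_set: "A \<in> sets borel \<Longrightarrow> joint_mass m P k A \<le> joint_mass m P k UNIV"
  unfolding joint_mass_eq_sum[of A] joint_mass_eq_sum[of UNIV, simplified]
  by (intro sum_mono mult_left_mono) (auto intro: path_evidence_mono_set)

lemma joint_mass_UNIV_index: "joint_mass m P k UNIV = joint_mass m P k' UNIV"
  unfolding joint_mass_def Xv_def by simp

lemma joint_mass_le_evidence:
  assumes "A \<in> sets borel"
  shows "joint_mass n P k A \<le> evidence"
proof -
  have "joint_mass n P k A \<le> joint_mass n P k UNIV" by (rule joint_mass_mono_set[OF assms])
  also have "\<dots> \<le> joint_mass n (\<lambda>_. True) k UNIV" by (rule joint_mass_mono_pred) simp_all
  also have "\<dots> = evidence" by (rule joint_mass_UNIV_index)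
  finally show ?thesis .
qed

lemma post_Xv_eq:
  "A \<in> sets borel \<Longrightarrow>
    post n q J p y n UNIV {\<omega>. Xv i \<omega> \<in> A} = enn2real (joint_mass n (\<lambda>_. True) i A) / enn2real evidence"
  by (rule post_eq_joint_mass_ratio) auto

lemma Hc_eq:
  "A \<in> sets borel \<Longrightarrow>
    Hc n q J p y j l A = enn2real (joint_mass l (\<lambda>c. c l = j) l A) / enn2real (joint_mass l (\<lambda>c. c l = j) l UNIV)"
  unfolding Hc_def by (rule post_eq_joint_mass_ratio) (auto simp: Cv_def)

lemma ct_last_eq: "ct n q J p y j n = enn2real (joint_mass n (\<lambda>c. c n = j) n UNIV) / enn2real evidence"
  unfolding ct_def by simp (rule post_eq_joint_mass_ratio; auto simp: Cv_def)

lemma ct_eq: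
  "l < n \<Longrightarrow> ct n q J p y j l = enn2real (joint_mass l (\<lambda>c. c l = j \<and> c (Suc l) = Suc l) l UNIV) /
    enn2real (joint_mass l (\<lambda>c. c (Suc l) = Suc l) l UNIV)"
  unfolding ct_def by simp (rule post_eq_joint_mass_ratio; auto simp: Cv_def)

lemma qt_Suc_eq:
  "qt n q J p y (Suc l) = enn2real (joint_mass n (\<lambda>c. c (Suc l) = Suc l) n UNIV) / enn2real evidence"
  unfolding qt_def by (rule post_eq_joint_mass_ratio) (auto simp: Cv_def)

lemma posterior_last_segment:
  assumes "evidence < \<top>" and A: "A \<in> sets borel"
  shows "enn2real (joint_mass n (\<lambda>c. c n = j) n A) / enn2real evidence = Hc n q J p y j n A * ct n q J p y j n"
  unfolding Hc_eq[OF A] ct_last_eq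
  by (rule enn2real_divide_factor[OF joint_mass_mono_set[OF A] joint_mass_le_evidence assms(1)]) simp

text \<open>The future factor cancels between the numerator and \<open>qt\<close>, and the transition factor
  \<open>1 - q j (Suc l)\<close> between the numerator and \<open>ct\<close>.\<close>
lemma posterior_changepoint_segment:
  assumes fin: "evidence < \<top>" and A: "A \<in> sets borel" and l: "1 \<le> l" "l < n"
  shows "enn2real (joint_mass n (\<lambda>c. c l = j \<and> c (Suc l) = Suc l) l A) / enn2real evidence =
    Hc n q J p y j l A * ct n q J p y j l * qt n q J p y (Suc l)"
proof -
  have sl: "Suc l \<le> n" using l by simp
  have sets_UNIV: "UNIV \<in> sets borel" by simp
  let ?a = "\<lambda>B. joint_mass l (\<lambda>c. c l = j) l B" and ?b = "ennreal (1 - q j (Suc l))"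
  let ?s = "joint_mass l (\<lambda>c. c (Suc l) = Suc l) l UNIV"
  have split: "joint_mass n (\<lambda>c. P c \<and> c (Suc l) = Suc l) l B =
      joint_mass l (\<lambda>c. P c \<and> c (Suc l) = Suc l) l B * future_mass l"
    if "\<And>c. P (path_prefix l c) = P c" "B \<in> sets borel" for P B
    by (rule joint_mass_split_at_changepoint[of l l P B, OF sl l(1) order.refl that])
  have numerator: "joint_mass n (\<lambda>c. c l = j \<and> c (Suc l) = Suc l) l A = ?b * ?a A * future_mass l"
    using split[of "\<lambda>c. c l = j" A] A by (simp add: joint_mass_changepoint_factor[OF sl A])
  have s_future: "?s * future_mass l = joint_mass n (\<lambda>c. c (Suc l) = Suc l) n UNIV"
    using split[of "\<lambda>_. True" UNIV] joint_mass_UNIV_index[of n _ n l] by simp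
  show ?thesis
    unfolding numerator Hc_eq[OF A] ct_eq[OF l(2)] qt_Suc_eq s_future[symmetric]
      joint_mass_changepoint_factor[OF sl sets_UNIV]
  proof (rule enn2real_divide_factor3)
    show "?a A \<le> ?a UNIV" by (rule joint_mass_mono_set[OF A])
    show "?b * ?a UNIV \<le> ?s"
      unfolding joint_mass_changepoint_factor[OF sl sets_UNIV, symmetric] by (rule joint_mass_mono_pred) simp_all
    show "?s * future_mass l \<le> evidence"
      unfolding s_future by (rule joint_mass_le_evidence) simp
  qed (simp_all add: fin)
qed

lemma post_Xv_eq_sum:
  assumes i: "0 < i" "i \<le> n" and A: "A \<in> sets borel"
  shows "post n q J p y n UNIV {\<omega>. Xv i \<omega> \<in> A} =
    (\<Sum>j=0..i. Hc n q J p y j n A * ct n q J p y j n +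
      (\<Sum>l=i..n-1. Hc n q J p y j l A * ct n q J p y j l * qt n q J p y (l + 1)))"
proof (cases "evidence < \<top>")
  case False
  then have "enn2real evidence = 0" by (simp add: less_top[symmetric])
  then show ?thesis
    unfolding post_Xv_eq[OF A] ct_last_eq Suc_eq_plus1[symmetric] qt_Suc_eq by simp
next
  case True
  let ?X = "\<lambda>j. joint_mass n (\<lambda>c. c n = j) n A"
  let ?P = "\<lambda>j l. joint_mass n (\<lambda>c. c l = j \<and> c (Suc l) = Suc l) l A"
  have "?X j < \<top>" "?P j l < \<top>" for j l
    using joint_mass_le_evidence[OF A] True by (auto intro: le_less_trans)
  then have decomp: "enn2real (joint_mass n (\<lambda>_. True) i A) =
      (\<Sum>j=0..i. enn2real (?X j) + (\<Sum>l=i..n-1. enn2real (?P j l)))"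
    unfolding joint_mass_decompose[OF i(2) A] by (simp add: enn2real_plus enn2real_sum sum.distrib)
  show ?thesis
    unfolding post_Xv_eq[OF A] decomp Suc_eq_plus1[symmetric] sum_divide_distrib add_divide_distrib
    using i by (intro sum.cong refl arg_cong2[where f="(+)"] posterior_last_segment[OF True A]
      posterior_changepoint_segment[OF True A]) auto
qed

end

theorem mainTheorem10:
  fixes n :: nat and y :: "nat \<Rightarrow> 'y::polish_space" and \<psi> :: "'y measure"
    and J :: "'x::polish_space measure" and q :: "nat \<Rightarrow> nat \<Rightarrow> real"
    and p :: "'x \<Rightarrow> 'y \<Rightarrow> real" and i :: nat and A :: "'x set"
  assumes "n \<ge> 1"
    and "sigma_finite_measure \<psi>" and "sets \<psi> = sets borel"
    and "prob_space J" and "sets J = sets borel"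
    and "\<And>j k. j < k \<Longrightarrow> k \<le> n \<Longrightarrow> 0 \<le> q j k \<and> q j k \<le> 1"
    and "(\<lambda>(x, v). p x v) \<in> borel_measurable (borel \<Otimes>\<^sub>M borel)"
    and "\<And>x v. 0 \<le> p x v"
    and "\<And>x. (\<integral>\<^sup>+ v. ennreal (p x v) \<partial>\<psi>) = 1"
    and "\<And>j k. 0 < j \<Longrightarrow> j \<le> k \<Longrightarrow> k \<le> n \<Longrightarrow>
           (\<integral>\<^sup>+ x. ennreal (\<Prod>l\<in>{j..k}. p x (y l)) \<partial>J) > 0"
    and "0 < i" and "i \<le> n" and "A \<in> sets borel"
  shows "post n q J p y n UNIV {\<omega>. Xv i \<omega> \<in> A} =
     (\<Sum>j=0..i. Hc n q J p y j n A * ct n q J p y j n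
        + (\<Sum>l=i..n-1. Hc n q J p y j l A * ct n q J p y j l * qt n q J p y (l + 1)))"
proof -
  interpret changepoint_model n q J p y
    by (intro changepoint_model.intro changepoint_prior.intro changepoint_model_axioms.intro)
      (fact assms)+
  show ?thesis by (rule post_Xv_eq_sum) (fact assms)+
qed

end
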